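(* Let $n\ge 1$ be an integer and let $P_n$ denote the path on $n$ vertices. For any $x\in\mathbb{N}$ and any integer $y$ with $0\le y\le x$, except for the case $x=y=1$, we have \[ P(P_n,x,y) = \frac{\sqrt{(x+1)^2-4y}-x-1}{2\sqrt{(x+1)^2-4y}}\cdot \left( \frac{x-1-\sqrt{(x+1)^2-4y}}{2} \right)^n + \frac{\sqrt{(x+1)^2-4y}+x+1}{2\sqrt{(x+1)^2-4y}}\cdot \left( \frac{x-1+\sqrt{(x+1)^2-4y}}{2} \right)^n . \]
   Context: For a finite simple graph $G=(V,E)$, $x\in\mathbb{N}$ and $y\in\{0,\dots,x\}$, the bivariate chromatic polynomial $P(G,x,y)$ is the number of maps $f:V\to\{1,\dots,x\}$ such that for every edge $\{v,w\}\in E$, either $f(v)\neq f(w)$ or $f(v)=f(w)>y$. (Equivalently: colorings in which adjacent vertices receive different colors or share a color from $\{y+1,\dots,x\}$.) *)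

theory Defs
  imports Complex_Main "HOL-Library.FuncSet"
begin

text \<open>Maps are taken extensional (undefined outside V)
so that the set of maps is finite.\<close>

definition bivariate_chrom :: "'a set \<Rightarrow> 'a set set \<Rightarrow> nat \<Rightarrow> nat \<Rightarrow> nat" where
  "bivariate_chrom V E x y =
     card {f. f \<in> V \<rightarrow>\<^sub>E {1..x} \<and>
              (\<forall>v w. {v, w} \<in> E \<longrightarrow> f v \<noteq> f w \<or> f v > y)}"

definition path_vertices :: "nat \<Rightarrow> nat set" where
  "path_vertices n = {0..<n}"

definition path_edges :: "nat \<Rightarrow> nat set set" where
  "path_edges n = {{i, Suc i} | i. Suc i < n}"

end

theory Submission
  imports Defs
begin

text \<open>Let \<open>p n\<close> be the number of admissible colourings of the path on \<open>n\<close> vertices and \<open>l n\<close> the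
number of those whose end vertex gets a colour in \<open>{1..y}\<close>. Appending a vertex, the new colour
is free in \<open>{1..x}\<close> except that it must differ from the end colour when that colour is
\<open>\<le> y\<close>; hence \<open>p (n+1) = x p n - l n\<close> and \<open>l (n+1) = y p n - l n\<close>. Eliminating \<open>l\<close> gives
\<open>p (n+2) = (x - 1) p (n+1) + (x - y) p n\<close> with \<open>p 0 = 1\<close>, \<open>p 1 = x\<close>. The characteristic
roots \<open>(x - 1 \<plusminus> \<surd>((x + 1)\<^sup>2 - 4y)) / 2\<close> are distinct unless \<open>x = y = 1\<close>, and the stated
formula is the Binet formula for these initial values.\<close>

definition path_colorings :: "nat \<Rightarrow> nat \<Rightarrow> nat \<Rightarrow> (nat \<Rightarrow> nat) set" where
  "path_colorings x y n =
     {f \<in> {0..<n} \<rightarrow>\<^sub>E {1..x}. \<forall>i. Suc i < n \<longrightarrow> f i \<noteq> f (Suc i) \<or> y < f i}"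

definition low_end_colorings :: "nat \<Rightarrow> nat \<Rightarrow> nat \<Rightarrow> (nat \<Rightarrow> nat) set" where
  "low_end_colorings x y n = {g \<in> path_colorings x y n. 0 < n \<and> g (n - 1) \<le> y}"

text \<open>For \<open>n = 0\<close> the end colour \<open>g (n - 1)\<close> is a junk value, neutralised by the disjunct \<open>n = 0\<close>.\<close>

definition next_colors :: "nat \<Rightarrow> nat \<Rightarrow> nat \<Rightarrow> (nat \<Rightarrow> nat) \<Rightarrow> nat set" where
  "next_colors x y n g = {c \<in> {1..x}. c = g (n - 1) \<longrightarrow> n = 0 \<or> y < c}"

lemma bivariate_chrom_path:
  "bivariate_chrom (path_vertices n) (path_edges n) x y = card (path_colorings x y n)"
proof -
  have "{v, w} \<in> path_edges n \<longleftrightarrow> (\<exists>i. Suc i < n \<and> (v = i \<and> w = Suc i \<or> v = Suc i \<and> w = i))"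
    for v w :: nat
    by (auto simp: path_edges_def doubleton_eq_iff)
  then have "(\<forall>v w. {v, w} \<in> path_edges n \<longrightarrow> f v \<noteq> f w \<or> y < f v) \<longleftrightarrow>
             (\<forall>i. Suc i < n \<longrightarrow> f i \<noteq> f (Suc i) \<or> y < f i)" for f :: "nat \<Rightarrow> nat"
    by (metis less_SucI not_less_eq)
  then show ?thesis
    by (simp add: bivariate_chrom_def path_colorings_def path_vertices_def)
qed

lemma finite_path_colorings: "finite (path_colorings x y n)"
  by (rule finite_subset[of _ "{0..<n} \<rightarrow>\<^sub>E {1..x}"]) (auto simp: path_colorings_def finite_PiE)

lemma card_path_colorings_Suc_end_in_sum:
  "card {f \<in> path_colorings x y (Suc n). f n \<in> C} =
   (\<Sum>g\<in>path_colorings x y n. card (next_colors x y n g \<inter> C))"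
proof -
  let ?ext = "SIGMA g:path_colorings x y n. next_colors x y n g \<inter> C"
  have "bij_betw (\<lambda>f. (restrict f {0..<n}, f n)) {f \<in> path_colorings x y (Suc n). f n \<in> C} ?ext"
  proof (rule bij_betw_byWitness[where f' = "\<lambda>(g, c). g(n := c)"])
    show "\<forall>f\<in>{f \<in> path_colorings x y (Suc n). f n \<in> C}.
            (case (restrict f {0..<n}, f n) of (g, c) \<Rightarrow> g(n := c)) = f"
      by (auto simp: path_colorings_def PiE_def extensional_def fun_eq_iff)
    show "\<forall>p\<in>?ext. (restrict ((case p of (g, c) \<Rightarrow> g(n := c))) {0..<n},
                   (case p of (g, c) \<Rightarrow> g(n := c)) n) = p"
      by (auto simp: path_colorings_def PiE_def extensional_def fun_eq_iff)
    show "(\<lambda>f. (restrict f {0..<n}, f n)) ` {f \<in> path_colorings x y (Suc n). f n \<in> C} \<subseteq> ?ext"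
      by (cases n) (auto simp: path_colorings_def next_colors_def PiE_def extensional_def)
    show "(\<lambda>(g, c). g(n := c)) ` ?ext \<subseteq> {f \<in> path_colorings x y (Suc n). f n \<in> C}"
      by (auto simp: path_colorings_def next_colors_def PiE_def extensional_def less_Suc_eq)
  qed
  then have "card {f \<in> path_colorings x y (Suc n). f n \<in> C} = card ?ext"
    by (rule bij_betw_same_card)
  also have "\<dots> = (\<Sum>g\<in>path_colorings x y n. card (next_colors x y n g \<inter> C))"
    by (rule card_SigmaI) (auto simp: finite_path_colorings next_colors_def)
  finally show ?thesis .
qed

lemma card_next_colors_Int:
  assumes "g \<in> path_colorings x y n" and "{1..y} \<subseteq> C" and "C \<subseteq> {1..x}"
  shows "real (card (next_colors x y n g \<inter> C)) = real (card C) - of_bool (g \<in> low_end_colorings x y n)"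
proof (cases "g \<in> low_end_colorings x y n")
  case True
  then have "g (n - 1) \<in> C" "0 < n" "g (n - 1) \<le> y"
    using assms(1,2) by (auto simp: low_end_colorings_def path_colorings_def PiE_def Pi_def)
  moreover have "next_colors x y n g \<inter> C = C - {g (n - 1)}"
    using calculation assms(3) by (auto simp: next_colors_def)
  moreover have "card C \<ge> 1"
    using calculation assms(3) finite_subset[OF assms(3)] by (auto simp: Suc_le_eq card_gt_0_iff)
  ultimately show ?thesis
    using True finite_subset[OF assms(3)] by (simp add: of_nat_diff)
next
  case False
  then have "next_colors x y n g \<inter> C = C"
    using assms(1,3) by (auto simp: next_colors_def low_end_colorings_def)
  then show ?thesis
    using False by simp
qed

lemma card_path_colorings_Suc_end_in:
  assumes "{1..y} \<subseteq> C" and "C \<subseteq> {1..x}"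
  shows "real (card {f \<in> path_colorings x y (Suc n). f n \<in> C}) =
         real (card C) * real (card (path_colorings x y n)) - real (card (low_end_colorings x y n))"
proof -
  have low: "low_end_colorings x y n \<subseteq> path_colorings x y n"
    by (auto simp: low_end_colorings_def)
  have "real (card {f \<in> path_colorings x y (Suc n). f n \<in> C}) =
        (\<Sum>g\<in>path_colorings x y n. real (card C) - of_bool (g \<in> low_end_colorings x y n))"
    unfolding card_path_colorings_Suc_end_in_sum of_nat_sum
    by (rule sum.cong[OF refl]) (rule card_next_colors_Int[OF _ assms])
  also have "\<dots> = real (card C) * real (card (path_colorings x y n)) - real (card (low_end_colorings x y n))"
    by (simp add: sum_subtractf finite_path_colorings Int_absorb1[OF low])
  finally show ?thesis .
qed

lemma path_colorings_recurrence:
  assumes "y \<le> x"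
  shows "real (card (path_colorings x y (Suc (Suc n)))) =
         (real x - 1) * real (card (path_colorings x y (Suc n))) +
         (real x - real y) * real (card (path_colorings x y n))"
proof -
  have all: "{f \<in> path_colorings x y (Suc m). f m \<in> {1..x}} = path_colorings x y (Suc m)" for m
    by (auto simp: path_colorings_def PiE_def Pi_def)
  have low: "{f \<in> path_colorings x y (Suc m). f m \<in> {1..y}} = low_end_colorings x y (Suc m)" for m
    by (auto simp: path_colorings_def low_end_colorings_def PiE_def Pi_def)
  have total: "real (card (path_colorings x y (Suc m))) =
      real x * real (card (path_colorings x y m)) - real (card (low_end_colorings x y m))" for m
    using card_path_colorings_Suc_end_in[of y "{1..x}" x m] assms unfolding all by simp
  have low_end: "real (card (low_end_colorings x y (Suc m))) =
      real y * real (card (path_colorings x y m)) - real (card (low_end_colorings x y m))" for m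
    using card_path_colorings_Suc_end_in[of y "{1..y}" x m] assms unfolding low by simp
  have "real (card (low_end_colorings x y n)) =
      real x * real (card (path_colorings x y n)) - real (card (path_colorings x y (Suc n)))"
    using total[of n] by simp
  then show ?thesis
    using total[of "Suc n"] low_end[of n] by (simp add: algebra_simps)
qed

lemma card_path_colorings_0: "card (path_colorings x y 0) = 1"
  by (simp add: path_colorings_def)

lemma card_path_colorings_1: "card (path_colorings x y 1) = x"
  by (simp add: path_colorings_def card_PiE)

lemma second_order_recurrence_unique:
  fixes u v :: "nat \<Rightarrow> 'a::comm_semiring"
  assumes "\<And>n. u (Suc (Suc n)) = b * u (Suc n) + c * u n"
    and "\<And>n. v (Suc (Suc n)) = b * v (Suc n) + c * v n"
    and "u 0 = v 0" and "u 1 = v 1"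
  shows "u n = v n"
  by (induction n rule: induct_nat_012) (simp_all add: assms(1,2,3) assms(4)[unfolded One_nat_def])

lemma quadratic_root:
  fixes b c s :: "'a::field_char_0"
  assumes "s\<^sup>2 = b\<^sup>2 + 4 * c"
  shows "((b + s) / 2)\<^sup>2 = b * ((b + s) / 2) + c"
proof -
  have "((b + s) / 2)\<^sup>2 - (b * ((b + s) / 2) + c) = (s\<^sup>2 - b\<^sup>2 - 4 * c) / 4"
    by (simp add: power2_eq_square field_simps)
  then show ?thesis
    using assms by simp
qed

lemma power_Suc_Suc_of_root:
  fixes r b c :: "'a::comm_ring_1"
  assumes "r\<^sup>2 = b * r + c"
  shows "r ^ Suc (Suc k) = b * r ^ Suc k + c * r ^ k"
proof -
  have "r ^ Suc (Suc k) = r ^ k * r\<^sup>2"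
    by (simp add: power2_eq_square algebra_simps)
  also have "\<dots> = b * r ^ Suc k + c * r ^ k"
    unfolding assms by (simp add: algebra_simps)
  finally show ?thesis .
qed

lemma linear_recurrence_Binet:
  fixes u :: "nat \<Rightarrow> 'a::field_char_0"
  assumes rec: "\<And>n. u (Suc (Suc n)) = b * u (Suc n) + c * u n"
    and s: "s\<^sup>2 = b\<^sup>2 + 4 * c" and "s \<noteq> 0"
  shows "u n = ((s + b) * u 0 - 2 * u 1) / (2 * s) * ((b - s) / 2) ^ n
             + ((s - b) * u 0 + 2 * u 1) / (2 * s) * ((b + s) / 2) ^ n"
proof -
  define r\<^sub>1 r\<^sub>2 where "r\<^sub>1 = (b - s) / 2" and "r\<^sub>2 = (b + s) / 2"
  define \<alpha> \<beta> where "\<alpha> = ((s + b) * u 0 - 2 * u 1) / (2 * s)"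
    and "\<beta> = ((s - b) * u 0 + 2 * u 1) / (2 * s)"
  have "r\<^sub>1\<^sup>2 = b * r\<^sub>1 + c" and "r\<^sub>2\<^sup>2 = b * r\<^sub>2 + c"
    using quadratic_root[of "- s" b c] quadratic_root[of s b c] s
    unfolding r\<^sub>1_def r\<^sub>2_def by simp_all
  note root_power = this[THEN power_Suc_Suc_of_root]
  have "u n = \<alpha> * r\<^sub>1 ^ n + \<beta> * r\<^sub>2 ^ n"
  proof (rule second_order_recurrence_unique[where u = u, OF rec])
    show "\<alpha> * r\<^sub>1 ^ Suc (Suc k) + \<beta> * r\<^sub>2 ^ Suc (Suc k) =
      b * (\<alpha> * r\<^sub>1 ^ Suc k + \<beta> * r\<^sub>2 ^ Suc k) + c * (\<alpha> * r\<^sub>1 ^ k + \<beta> * r\<^sub>2 ^ k)" for k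
      unfolding root_power by (simp add: algebra_simps)
  qed (use \<open>s \<noteq> 0\<close> in \<open>simp_all add: \<alpha>_def \<beta>_def r\<^sub>1_def r\<^sub>2_def field_simps\<close>)
  then show ?thesis
    unfolding \<alpha>_def \<beta>_def r\<^sub>1_def r\<^sub>2_def .
qed

theorem theorem1:
  fixes n x y :: nat
  assumes "n \<ge> 1" and "y \<le> x" and "\<not> (x = 1 \<and> y = 1)"
  shows "real (bivariate_chrom (path_vertices n) (path_edges n) x y) =
    (sqrt ((real x + 1)^2 - 4 * real y) - real x - 1) / (2 * sqrt ((real x + 1)^2 - 4 * real y))
      * ((real x - 1 - sqrt ((real x + 1)^2 - 4 * real y)) / 2) ^ n
  + (sqrt ((real x + 1)^2 - 4 * real y) + real x + 1) / (2 * sqrt ((real x + 1)^2 - 4 * real y))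
      * ((real x - 1 + sqrt ((real x + 1)^2 - 4 * real y)) / 2) ^ n"
proof -
  define s where "s = sqrt ((real x + 1)^2 - 4 * real y)"
  have discr: "(real x + 1)^2 - 4 * real y = (real x - 1)\<^sup>2 + 4 * (real x - real y)"
    by (simp add: power2_eq_square algebra_simps)
  have "real x - real y \<ge> 0"
    using assms(2) by simp
  then have s2: "s\<^sup>2 = (real x - 1)\<^sup>2 + 4 * (real x - real y)"
    unfolding s_def discr by simp
  have "s \<noteq> 0"
  proof
    assume "s = 0"
    then have "(real x - 1)\<^sup>2 = 0" and "real x - real y = 0"
      using s2 \<open>real x - real y \<ge> 0\<close> by (simp_all add: add_nonneg_eq_0_iff)
    then show False
      using assms(3) by simp
  qed
  from linear_recurrence_Binet[where u = "\<lambda>k. real (card (path_colorings x y k))",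
      OF path_colorings_recurrence[OF assms(2)] s2 this, of n]
  show ?thesis
    unfolding bivariate_chrom_path s_def[symmetric] card_path_colorings_0 card_path_colorings_1
    by (simp add: algebra_simps)
qed

end
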